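(* Let $n\ge 2$, $r>0$, $I_n=\{\bm{x}\in\mathbb{R}^n: |x_i|\le r,\ i=1,\dots,n\}$, and let $f(\bm{x})=g(\bm{x})\prod_{1\le i<j\le n}(x_i^2-x_j^2)^2$, where $g\in C(I_n)$ and $g\ge 0$ on $I_n$. Then $h\equiv 0$ is a best one-sided $L^1$-approximant from below to $f$ with respect to $\mathcal{H}(I_n)$, i.e. $0\le f$ on $I_n$ and $\|f\|_1\le\|f-h\|_1$ for every $h\in\mathcal{H}_-(I_n,f)$.
   Context: $\mathcal{H}(I_n)$ is the space of functions harmonic ($C^2$ with vanishing Laplacian) in some domain containing $I_n$; $\mathcal{H}_-(I_n,f)=\{h\in\mathcal{H}(I_n): h\le f \text{ on } I_n\}$; $\|u\|_1=\int_{I_n}|u|\,d\lambda_n$ with $\lambda_n$ Lebesgue measure. *)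

theory Defs
  imports "HOL-Analysis.Analysis"
begin

definition partial :: "(real^'n \<Rightarrow> real) \<Rightarrow> 'n \<Rightarrow> real^'n \<Rightarrow> real" where
  "partial h i x = deriv (\<lambda>t. h (x + t *\<^sub>R axis i 1)) 0"

definition harmonic_on :: "(real^'n) set \<Rightarrow> (real^'n \<Rightarrow> real) \<Rightarrow> bool" where
  "harmonic_on S h \<longleftrightarrow> open S \<and> continuous_on S h
     \<and> (\<forall>i. \<forall>x\<in>S. (\<lambda>t. h (x + t *\<^sub>R axis i 1)) differentiable (at 0))
     \<and> (\<forall>i. continuous_on S (partial h i))
     \<and> (\<forall>i j. \<forall>x\<in>S. (\<lambda>t. partial h i (x + t *\<^sub>R axis j 1)) differentiable (at 0))
     \<and> (\<forall>i j. continuous_on S (partial (partial h i) j))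
     \<and> (\<forall>x\<in>S. (\<Sum>i\<in>UNIV. partial (partial h i) i x) = 0)"

definition harm :: "(real^'n) set \<Rightarrow> (real^'n \<Rightarrow> real) set" where
  "harm I = {h. \<exists>S. I \<subseteq> S \<and> harmonic_on S h}"

definition harm_below :: "(real^'n) set \<Rightarrow> (real^'n \<Rightarrow> real) \<Rightarrow> (real^'n \<Rightarrow> real) set" where
  "harm_below I f = {h \<in> harm I. \<forall>x\<in>I. h x \<le> f x}"

definition L1_norm :: "(real^'n) set \<Rightarrow> (real^'n \<Rightarrow> real) \<Rightarrow> real" where
  "L1_norm I u = integral\<^sup>L (lebesgue_on I) (\<lambda>x. \<bar>u x\<bar>)"

end

theory Submission
  imports Defs
begin

(* Split the cube I according to which coordinate has the largest modulus (ties going to the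
   smallest index). On a line in direction i, the region where |x_i| dominates is
   A < |t| <= r with A = max_{j ~= i} |x_j|, and the weight (r - max_j |x_j|)^2 / 2 restricts to
   (r - max A |t|)^2 / 2. Integrating by parts twice against this weight expresses the integral
   of h over that part of the line through the integral of d_i^2 h times the weight, plus a
   boundary term built from h at t = A and t = -A. Integrating over the remaining coordinates
   and summing over i, the second derivatives add up to the Laplacian, which vanishes, so the
   integral of h over I equals the integral of the boundary terms. These only evaluate h at
   points with |x_i| = |x_j| for some j ~= i, where f = 0 and hence h <= 0. Thus the integral of
   h over I is <= 0, and |f - h| = f - h on I gives ||f - h||_1 >= ||f||_1. *)

lemma integrable_indicator_Icc_mult:
  fixes G :: "real \<Rightarrow> real"
  assumes "continuous_on {c..d} G"
  shows "integrable lborel (\<lambda>t. indicator {c..d} t * G t)"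
  using borel_integrable_atLeastAtMost'[OF assms] by (simp add: set_integrable_def)

lemma lborel_integral_indicator_Icc:
  fixes G :: "real \<Rightarrow> real"
  assumes "continuous_on {c..d} G"
  shows "(\<integral>t. indicator {c..d} t * G t \<partial>lborel) = integral {c..d} G"
  using set_borel_integral_eq_integral(2)[OF borel_integrable_atLeastAtMost'[OF assms]]
  by (simp add: set_lebesgue_integral_def)

lemma integral_second_derivative_mult_half_square:
  fixes u v w :: "real \<Rightarrow> real"
  assumes "a \<le> b"
    and du: "\<And>t. t \<in> {a..b} \<Longrightarrow> (u has_real_derivative v t) (at t within {a..b})"
    and dv: "\<And>t. t \<in> {a..b} \<Longrightarrow> (v has_real_derivative w t) (at t within {a..b})"
    and cw: "continuous_on {a..b} w"
  shows "integral {a..b} (\<lambda>t. w t * (c - t)^2 / 2)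
       = integral {a..b} u + (v b * (c - b)^2 / 2 + u b * (c - b))
         - (v a * (c - a)^2 / 2 + u a * (c - a))"
proof -
  define F where "F t = v t * (c - t)^2 / 2 + u t * (c - t)" for t
  have "((\<lambda>t. w t * (c - t)^2 / 2 - u t) has_integral (F b - F a)) {a..b}"
  proof (rule fundamental_theorem_of_calculus[OF \<open>a \<le> b\<close>])
    fix t assume t: "t \<in> {a..b}"
    have "(F has_real_derivative
            w t * (c - t)^2 / 2 + v t * (2 * (c - t) * -1) / 2 + (v t * (c - t) + u t * -1))
          (at t within {a..b})"
      unfolding F_def[abs_def] by (intro derivative_eq_intros) (auto intro: du[OF t] dv[OF t])
    moreover have "w t * (c - t)^2 / 2 + v t * (2 * (c - t) * -1) / 2 + (v t * (c - t) + u t * -1)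
        = w t * (c - t)^2 / 2 - u t"
      by (simp add: field_simps)
    ultimately show "(F has_vector_derivative w t * (c - t)^2 / 2 - u t) (at t within {a..b})"
      by (simp only: has_real_derivative_iff_has_vector_derivative)
  qed
  moreover have "(u has_integral integral {a..b} u) {a..b}"
    using du
    by (intro integrable_integral integrable_continuous_real continuous_on_vector_derivative)
      (auto simp: has_real_derivative_iff_has_vector_derivative)
  ultimately have "((\<lambda>t. w t * (c - t)^2 / 2) has_integral (F b - F a + integral {a..b} u)) {a..b}"
    by (auto dest: has_integral_add)
  then show ?thesis
    unfolding F_def by (auto dest: integral_unique)
qed

lemma integral_second_derivative_mult_tent_square:
  fixes u v w :: "real \<Rightarrow> real"
  assumes du: "\<And>t. t \<in> {-r..r} \<Longrightarrow> (u has_real_derivative v t) (at t)"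
    and dv: "\<And>t. t \<in> {-r..r} \<Longrightarrow> (v has_real_derivative w t) (at t)"
    and cw: "continuous_on {-r..r} w"
    and A: "0 \<le> A" "A \<le> r"
  shows "integral {-r..r} (\<lambda>t. w t * (r - max A \<bar>t\<bar>)^2 / 2)
     = integral {A..r} u + integral {-r..-A} u - (r - A) * (u A + u (-A))"
proof -
  let ?P = "\<lambda>t. w t * (r - max A \<bar>t\<bar>)^2 / 2"
  have sub: "{-r..-A} \<subseteq> {-r..r}" "{-A..A} \<subseteq> {-r..r}" "{A..r} \<subseteq> {-r..r}"
    using A by auto
  have du': "(u has_real_derivative v t) (at t within T)"
      "(v has_real_derivative w t) (at t within T)"
    if "t \<in> T" "T \<subseteq> {-r..r}" for t T
    using that by (auto intro!: has_field_derivative_at_within du dv)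
  have cw': "continuous_on T w" if "T \<subseteq> {-r..r}" for T
    using cw that by (rule continuous_on_subset)
  have "?P integrable_on {-r..r}"
    by (intro integrable_continuous_real continuous_intros cw) auto
  then have split:
      "integral {-r..r} ?P = integral {-r..-A} ?P + integral {-A..A} ?P + integral {A..r} ?P"
    using A by (simp add: Henstock_Kurzweil_Integration.integral_combine integrable_on_subinterval)
  have "integral {A..r} ?P = integral {A..r} (\<lambda>t. w t * (r - t)^2 / 2)"
    using A by (intro integral_cong) (auto simp: max_def)
  also have "\<dots> = integral {A..r} u - (v A * (r - A)^2 / 2 + u A * (r - A))"
    using A sub by (subst integral_second_derivative_mult_half_square[where v = v])
      (auto intro!: du' cw')
  finally have right: "integral {A..r} ?P = \<dots>" .
  have "integral {-r..-A} ?P = integral {-r..-A} (\<lambda>t. w t * (-r - t)^2 / 2)"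
    using A by (intro integral_cong) (auto simp: max_def power2_commute)
  also have "\<dots> = integral {-r..-A} u + (v (-A) * (r - A)^2 / 2 - u (-A) * (r - A))"
    using A sub by (subst integral_second_derivative_mult_half_square[where v = v])
      (auto intro!: du' cw' simp: power2_commute algebra_simps)
  finally have left: "integral {-r..-A} ?P = \<dots>" .
  have "(?P has_integral (r - A)^2 / 2 * v A - (r - A)^2 / 2 * v (-A)) {-A..A}"
  proof (rule fundamental_theorem_of_calculus)
    fix t assume t: "t \<in> {-A..A}"
    have "((\<lambda>t. (r - A)^2 / 2 * v t) has_real_derivative (r - A)^2 / 2 * w t)
        (at t within {-A..A})"
      by (intro derivative_eq_intros) (use t sub in \<open>auto intro!: du'\<close>)
    moreover have "max A \<bar>t\<bar> = A"
      using t by auto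
    ultimately show "((\<lambda>t. (r - A)^2 / 2 * v t) has_vector_derivative ?P t) (at t within {-A..A})"
      by (simp add: has_real_derivative_iff_has_vector_derivative mult.commute)
  qed (use A in simp)
  then have mid: "integral {-A..A} ?P = (r - A)^2 / 2 * v A - (r - A)^2 / 2 * v (-A)"
    by (rule integral_unique)
  show ?thesis
    unfolding split right left mid by (simp add: field_simps power2_eq_square)
qed

lemma lborel_integral_zero_if_line_integrals_zero:
  fixes F :: "'a::euclidean_space \<Rightarrow> real"
  assumes b: "b \<in> Basis" and F: "integrable lborel F"
    and line: "\<And>p. p \<bullet> b = 0 \<Longrightarrow> (\<integral>t. F (p + t *\<^sub>R b) \<partial>lborel) = 0"
  shows "integral\<^sup>L lborel F = 0"
proof -
  let ?S = "\<lambda>f. \<Sum>c\<in>Basis. f c *\<^sub>R c :: 'a"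
  let ?J = "Basis - {b}"
  interpret product_sigma_finite "\<lambda>_::'a. lborel::real measure"
    by (simp add: product_sigma_finite_def lborel.sigma_finite_measure_axioms)
  have meas: "?S \<in> measurable (Pi\<^sub>M Basis (\<lambda>_. lborel)) borel"
    by measurable
  have Fm: "F \<in> borel_measurable borel"
    using F by auto
  have intP: "integrable (Pi\<^sub>M Basis (\<lambda>_. lborel)) (\<lambda>f. F (?S f))"
    using F by (subst (asm) lborel_eq) (simp add: integrable_distr_eq[OF meas Fm])
  have split_b: "?S (x(b := t)) = (\<Sum>c\<in>?J. x c *\<^sub>R c) + t *\<^sub>R b" for x t
    by (auto simp: sum.remove[OF finite_Basis b] intro!: sum.cong)
  have perp: "(\<Sum>c\<in>?J. x c *\<^sub>R c) \<bullet> b = 0" for x :: "'a \<Rightarrow> real"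
    by (simp add: inner_sum_left inner_not_same_Basis b)
  have "integral\<^sup>L lborel F = integral\<^sup>L (Pi\<^sub>M Basis (\<lambda>_. lborel)) (\<lambda>f. F (?S f))"
    by (subst lborel_eq) (rule integral_distr[OF meas Fm])
  also have "\<dots> = (\<integral>x. (\<integral>t. F (?S (x(b := t))) \<partial>lborel) \<partial>Pi\<^sub>M ?J (\<lambda>_. lborel))"
    using intP b product_integral_insert[of ?J b "\<lambda>f. F (?S f)"] by (simp add: insert_absorb)
  also have "\<dots> = 0"
    unfolding split_b line[OF perp] by simp
  finally show ?thesis .
qed

lemma continuous_on_Max_finite_family:
  fixes F :: "'i \<Rightarrow> 'a::topological_space \<Rightarrow> real"
  assumes "finite J" "J \<noteq> {}" "\<And>j. j \<in> J \<Longrightarrow> continuous_on S (F j)"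
  shows "continuous_on S (\<lambda>x. Max ((\<lambda>j. F j x) ` J))"
  using assms
proof (induction J rule: finite_ne_induct)
  case (insert k J)
  have "(\<lambda>x. Max ((\<lambda>j. F j x) ` insert k J))
      = (\<lambda>x. max (F k x) (Max ((\<lambda>j. F j x) ` J)))"
    using insert.hyps by (auto simp: Max_insert)
  then show ?case
    using insert by (auto intro!: continuous_on_max)
qed simp

definition max_abs_coord :: "real^'n::finite \<Rightarrow> real" where
  "max_abs_coord x = Max (range (\<lambda>j. \<bar>x$j\<bar>))"

definition max_abs_coord_except :: "'n::finite \<Rightarrow> real^'n \<Rightarrow> real" where
  "max_abs_coord_except i x = Max ((\<lambda>j. \<bar>x$j\<bar>) ` (UNIV - {i}))"

definition vec_upd :: "real^'n::finite \<Rightarrow> 'n \<Rightarrow> real \<Rightarrow> real^'n" where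
  "vec_upd x i t = x + (t - x$i) *\<^sub>R axis i 1"

text \<open>Points whose \<open>i\<close>-th coordinate has maximal modulus, ties going to the smallest index,
  so that these regions partition the space.\<close>
definition dominant_coord_region ::
    "'n::{finite,linorder} \<Rightarrow> (real^'n::{finite,linorder}) set" where
  "dominant_coord_region i =
     {x. \<forall>j. (j < i \<longrightarrow> \<bar>x$j\<bar> < \<bar>x$i\<bar>) \<and> (i < j \<longrightarrow> \<bar>x$j\<bar> \<le> \<bar>x$i\<bar>)}"

lemma vec_upd_nth [simp]: "vec_upd x i t $ j = (if j = i then t else x $ j)"
  by (simp add: vec_upd_def axis_def)

lemma continuous_on_vec_upd [continuous_intros]:
  "continuous_on S f \<Longrightarrow> continuous_on S c \<Longrightarrow> continuous_on S (\<lambda>x. vec_upd (f x) i (c x))"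
  unfolding vec_upd_def by (intro continuous_intros)

lemma UNIV_minus_singleton_nonempty:
  assumes "CARD('n::finite) \<ge> 2" shows "(UNIV::'n set) - {i} \<noteq> {}"
proof
  assume "(UNIV::'n set) - {i} = {}"
  then have "(UNIV::'n set) = {i}" by auto
  then have "CARD('n) = 1"
    by (metis card.empty card.insert empty_iff finite.intros(1) One_nat_def)
  with assms show False by simp
qed

lemma max_abs_coord_eq:
  assumes "CARD('n::finite) \<ge> 2"
  shows "max_abs_coord (x::real^'n) = max \<bar>x$i\<bar> (max_abs_coord_except i x)"
proof -
  have "range (\<lambda>j. \<bar>x$j\<bar>) = insert \<bar>x$i\<bar> ((\<lambda>j. \<bar>x$j\<bar>) ` (UNIV - {i}))"
    by auto
  then show ?thesis
    using UNIV_minus_singleton_nonempty[OF assms, of i]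
    by (simp add: max_abs_coord_def max_abs_coord_except_def Max_insert)
qed

lemma max_abs_coord_except_attained:
  assumes "CARD('n::finite) \<ge> 2"
  obtains j where "j \<noteq> i" "\<bar>(x::real^'n)$j\<bar> = max_abs_coord_except i x"
proof -
  have "max_abs_coord_except i x \<in> (\<lambda>j. \<bar>x$j\<bar>) ` (UNIV - {i})"
    unfolding max_abs_coord_except_def using UNIV_minus_singleton_nonempty[OF assms, of i]
    by (intro Max_in) auto
  then show ?thesis
    using that by (metis (no_types, lifting) DiffE imageE singletonI)
qed

lemma abs_nth_le_max_abs_coord_except:
  "j \<noteq> i \<Longrightarrow> \<bar>(x::real^'n::finite)$j\<bar> \<le> max_abs_coord_except i x"
  unfolding max_abs_coord_except_def by (intro Max_ge) auto

lemma max_abs_coord_except_le_iff: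
  assumes "CARD('n::finite) \<ge> 2"
  shows "max_abs_coord_except i (x::real^'n) \<le> c \<longleftrightarrow> (\<forall>j. j \<noteq> i \<longrightarrow> \<bar>x$j\<bar> \<le> c)"
  unfolding max_abs_coord_except_def using UNIV_minus_singleton_nonempty[OF assms, of i]
  by (subst Max_le_iff) auto

lemma max_abs_coord_except_nonneg:
  assumes "CARD('n::finite) \<ge> 2" shows "0 \<le> max_abs_coord_except i (x::real^'n)"
  by (metis abs_ge_zero max_abs_coord_except_attained[OF assms])

lemma max_abs_coord_except_cong:
  "(\<And>j. j \<noteq> i \<Longrightarrow> x$j = y$j) \<Longrightarrow>
    max_abs_coord_except i (x::real^'n::finite) = max_abs_coord_except i y"
  unfolding max_abs_coord_except_def by (intro arg_cong[where f=Max] image_cong) auto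

lemma continuous_on_max_abs_coord_except [continuous_intros]:
  assumes "CARD('n::finite) \<ge> 2"
  shows "continuous_on S (max_abs_coord_except i :: real^'n \<Rightarrow> real)"
  unfolding max_abs_coord_except_def[abs_def] using UNIV_minus_singleton_nonempty[OF assms]
  by (intro continuous_on_Max_finite_family continuous_intros) auto

lemma continuous_on_max_abs_coord [continuous_intros]:
  "continuous_on S (max_abs_coord :: real^'n::finite \<Rightarrow> real)"
  unfolding max_abs_coord_def[abs_def]
  by (intro continuous_on_Max_finite_family continuous_intros) auto

lemma dominant_coord_region_unique:
  assumes i: "x \<in> dominant_coord_region i" and k: "x \<in> dominant_coord_region k"
  shows "i = k"
proof (rule ccontr)
  have swap: False if "x \<in> dominant_coord_region i" "x \<in> dominant_coord_region k" "i < k" for i k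
  proof -
    from that have "\<bar>x$k\<bar> \<le> \<bar>x$i\<bar>" "\<bar>x$i\<bar> < \<bar>x$k\<bar>"
      unfolding dominant_coord_region_def by blast+
    then show False
      by simp
  qed
  assume "i \<noteq> k"
  then show False
    using swap[OF i k] swap[OF k i] by (meson neq_iff)
qed

lemma ex_dominant_coord_region: "\<exists>i. x \<in> dominant_coord_region i"
proof
  define K where "K = {j. \<forall>k. \<bar>x$k\<bar> \<le> \<bar>x$j\<bar>}"
  have "Max (range (\<lambda>j. \<bar>x$j\<bar>)) \<in> range (\<lambda>j. \<bar>x$j\<bar>)"
    by (rule Max_in) simp_all
  then obtain j where "\<bar>x$j\<bar> = Max (range (\<lambda>j. \<bar>x$j\<bar>))"
    by (metis imageE)
  then have "j \<in> K"
    unfolding K_def by simp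
  then have m: "Min K \<in> K" and min: "\<And>j. j \<in> K \<Longrightarrow> Min K \<le> j"
    by (auto intro: Min_in)
  have "\<bar>x$j\<bar> < \<bar>x$Min K\<bar>" if "j < Min K" for j
  proof -
    from that min have "j \<notin> K"
      using leD by blast
    then obtain k where "\<bar>x$j\<bar> < \<bar>x$k\<bar>"
      unfolding K_def by (auto simp: not_le)
    moreover have "\<bar>x$k\<bar> \<le> \<bar>x$Min K\<bar>"
      using m unfolding K_def by blast
    ultimately show ?thesis
      by linarith
  qed
  with m show "x \<in> dominant_coord_region (Min K)"
    unfolding dominant_coord_region_def K_def by blast
qed

lemma sum_indicator_dominant_coord_region:
  "(\<Sum>i\<in>UNIV. indicator (dominant_coord_region i) x) = (1::real)"
proof -
  obtain i where i: "x \<in> dominant_coord_region i"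
    using ex_dominant_coord_region by blast
  have "indicator (dominant_coord_region k) x = (if k = i then 1 else 0 :: real)" for k
    using i dominant_coord_region_unique[OF i, of k]
    by (cases "k = i") (auto simp: indicator_def)
  then show ?thesis
    by (simp add: sum.delta)
qed

lemma dominant_coord_region_borel:
  fixes i :: "'n::{finite,linorder}"
  shows "dominant_coord_region i \<in> sets (borel :: (real, 'n) vec measure)"
proof -
  have "dominant_coord_region i =
      (\<Inter>j\<in>{j. j < i}. {x. \<bar>x$j\<bar> < \<bar>x$i\<bar>})
      \<inter> (\<Inter>j\<in>{j. i < j}. {x. \<bar>x$j\<bar> \<le> \<bar>x$i\<bar>})"
    unfolding dominant_coord_region_def by auto
  moreover have "{x. \<bar>x$j\<bar> < \<bar>x$i\<bar>} \<in> sets (borel :: (real, 'n) vec measure)" for j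
    by (intro borel_open open_Collect_less continuous_intros)
  moreover have "{x. \<bar>x$j\<bar> \<le> \<bar>x$i\<bar>} \<in> sets (borel :: (real, 'n) vec measure)" for j
    by (intro borel_closed closed_Collect_le continuous_intros)
  ultimately show ?thesis
    by simp
qed

lemma mem_dominant_coord_region_iff:
  fixes x :: "real^'n::{finite,linorder}"
  assumes "CARD('n) \<ge> 2" and "\<bar>x$i\<bar> \<noteq> max_abs_coord_except i x"
  shows "x \<in> dominant_coord_region i \<longleftrightarrow> max_abs_coord_except i x < \<bar>x$i\<bar>"
proof
  assume x: "x \<in> dominant_coord_region i"
  obtain j where j: "j \<noteq> i" "\<bar>x$j\<bar> = max_abs_coord_except i x"
    using max_abs_coord_except_attained[OF assms(1)] by blast
  have "\<bar>x$j\<bar> \<le> \<bar>x$i\<bar>"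
    using x j(1) by (cases "j < i") (auto simp: dominant_coord_region_def neq_iff)
  with j(2) assms(2) show "max_abs_coord_except i x < \<bar>x$i\<bar>"
    by simp
next
  assume "max_abs_coord_except i x < \<bar>x$i\<bar>"
  then show "x \<in> dominant_coord_region i"
    using abs_nth_le_max_abs_coord_except[of _ i x]
    by (force simp: dominant_coord_region_def)
qed

lemma vec_upd_vec_upd [simp]: "vec_upd (vec_upd x i t) i s = vec_upd x i s"
  by (simp add: vec_eq_iff)

lemma vec_upd_add_axis: "vec_upd x i t + s *\<^sub>R axis i 1 = vec_upd x i (s + t)"
  by (simp add: vec_eq_iff axis_def)

lemma max_abs_coord_except_vec_upd [simp]:
  "max_abs_coord_except i (vec_upd x i t) = max_abs_coord_except i x"
  by (rule max_abs_coord_except_cong) simp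

lemma has_real_derivative_partial_vec_upd:
  fixes G :: "real^'n::finite \<Rightarrow> real"
  assumes "(\<lambda>s. G (vec_upd x i t + s *\<^sub>R axis i 1)) differentiable (at 0)"
  shows "((\<lambda>s. G (vec_upd x i s)) has_real_derivative partial G i (vec_upd x i t)) (at t)"
proof -
  have "((\<lambda>s. G (vec_upd x i (s + t))) has_real_derivative partial G i (vec_upd x i t)) (at 0)"
    using assms unfolding partial_def vec_upd_add_axis
    by (simp add: DERIV_deriv_iff_real_differentiable)
  then show ?thesis
    using DERIV_shift[of "\<lambda>s. G (vec_upd x i s)" _ 0 t] by simp
qed

definition cube :: "real \<Rightarrow> (real^'n::finite) set" where
  "cube r = {x. \<forall>i. \<bar>x$i\<bar> \<le> r}"

lemma cube_eq_cbox: "cube r = cbox (\<chi> i. -r) (\<chi> i. r)"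
  unfolding cube_def by (auto simp: mem_box_cart abs_le_iff minus_le_iff[of _ r])

lemma compact_cube: "compact (cube r)"
  unfolding cube_eq_cbox by simp

lemma cube_borel: "cube r \<in> sets borel"
  unfolding cube_eq_cbox by simp

lemma vec_upd_mem_cube_iff:
  assumes "CARD('n::finite) \<ge> 2"
  shows "vec_upd (x::real^'n) i t \<in> cube r \<longleftrightarrow> \<bar>t\<bar> \<le> r \<and> max_abs_coord_except i x \<le> r"
  unfolding cube_def max_abs_coord_except_le_iff[OF assms] by auto

locale axial_C2_on_cube =
  fixes r :: real and h :: "real^'n::{finite,linorder} \<Rightarrow> real"
  assumes card_ge_2: "CARD('n) \<ge> 2"
    and r_pos: "r > 0"
    and continuous_h: "continuous_on (cube r) h"
    and differentiable_h:
      "\<And>i x. x \<in> cube r \<Longrightarrow> (\<lambda>t. h (x + t *\<^sub>R axis i 1)) differentiable (at 0)"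
    and differentiable_partial:
      "\<And>i x. x \<in> cube r \<Longrightarrow> (\<lambda>t. partial h i (x + t *\<^sub>R axis i 1)) differentiable (at 0)"
    and continuous_partial2: "\<And>i. continuous_on (cube r) (partial (partial h i) i)"
begin

definition cube_weight :: "(real, 'n) vec \<Rightarrow> real" where
  "cube_weight x = (r - max_abs_coord x)^2 / 2"

text \<open>The boundary term of \<open>integral_second_derivative_mult_tent_square\<close> on the line through
  \<open>x\<close> in direction \<open>i\<close>, divided by the length \<open>2 r\<close> of the segment, so that it is constant on
  the line and integrates back to the boundary term.\<close>
definition diagonal_term :: "'n \<Rightarrow> (real, 'n) vec \<Rightarrow> real" where
  "diagonal_term i x = (r - max_abs_coord_except i x) *
     (h (vec_upd x i (max_abs_coord_except i x)) + h (vec_upd x i (- max_abs_coord_except i x)))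
     / (2 * r)"

definition region_discrepancy :: "'n \<Rightarrow> (real, 'n) vec \<Rightarrow> real" where
  "region_discrepancy i x =
     indicator (cube r) x * (partial (partial h i) i x * cube_weight x + diagonal_term i x)
     - indicator (cube r \<inter> dominant_coord_region i) x * h x"

lemma diagonal_term_vec_upd [simp]: "diagonal_term i (vec_upd x i t) = diagonal_term i x"
  by (simp add: diagonal_term_def)

lemma cube_weight_vec_upd:
  "cube_weight (vec_upd x i t) = (r - max \<bar>t\<bar> (max_abs_coord_except i x))^2 / 2"
  by (simp add: cube_weight_def max_abs_coord_eq[OF card_ge_2, of _ i])

lemma continuous_on_diagonal_term: "continuous_on (cube r) (diagonal_term i)"
proof -
  have vec_upd_in_cube: "vec_upd x i (s * max_abs_coord_except i x) \<in> cube r"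
    if "x \<in> cube r" "\<bar>s\<bar> = 1" for x s
    using that max_abs_coord_except_nonneg[OF card_ge_2, of i x]
    by (auto simp: vec_upd_mem_cube_iff[OF card_ge_2] abs_mult cube_def
        max_abs_coord_except_le_iff[OF card_ge_2])
  have "continuous_on (cube r) (\<lambda>x. h (vec_upd x i (s * max_abs_coord_except i x)))"
    if "\<bar>s\<bar> = 1" for s
    by (rule continuous_on_compose2[OF continuous_h])
      (use vec_upd_in_cube that in \<open>auto intro!: continuous_intros card_ge_2\<close>)
  from this[of 1] this[of "-1"] show ?thesis
    unfolding diagonal_term_def using r_pos by (auto intro!: continuous_intros card_ge_2)
qed

lemma integrable_region_discrepancy: "integrable lborel (region_discrepancy i)"
proof -
  have cont:
    "continuous_on (cube r) (\<lambda>x. partial (partial h i) i x * cube_weight x + diagonal_term i x)"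
    unfolding cube_weight_def
    by (intro continuous_intros continuous_partial2 continuous_on_diagonal_term) auto
  have "integrable lborel (\<lambda>x. indicator (cube r) x *
      (partial (partial h i) i x * cube_weight x + diagonal_term i x))"
    using borel_integrable_compact[OF compact_cube cont] unfolding real_scaleR_def .
  moreover have "integrable lborel
      (\<lambda>x. indicator (dominant_coord_region i) x *\<^sub>R (indicator (cube r) x * h x))"
    using borel_integrable_compact[OF compact_cube continuous_h] dominant_coord_region_borel[of i]
    by (intro integrable_mult_indicator) (simp_all add: real_scaleR_def)
  ultimately show ?thesis
    unfolding region_discrepancy_def[abs_def]
    by (simp add: indicator_inter_arith mult.assoc mult.commute mult.left_commute)
qed

lemma vec_upd_in_cube:
  fixes i :: 'n
  shows "max_abs_coord_except i p \<le> r \<Longrightarrow> t \<in> {-r..r} \<Longrightarrow> vec_upd p i t \<in> cube r"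
  by (auto simp: vec_upd_mem_cube_iff[OF card_ge_2])

lemma continuous_on_restrict_to_line:
  fixes i :: 'n
  assumes "continuous_on (cube r) F" "max_abs_coord_except i p \<le> r"
  shows "continuous_on {-r..r} (\<lambda>t. F (vec_upd p i t))"
  by (rule continuous_on_compose2[OF assms(1)])
    (use assms(2) vec_upd_in_cube in \<open>auto intro!: continuous_intros\<close>)

lemma region_discrepancy_on_line:
  fixes i :: 'n and p :: "(real, 'n) vec"
  defines "A \<equiv> max_abs_coord_except i p"
  assumes "A \<le> r" "\<bar>t\<bar> \<noteq> A"
  shows "region_discrepancy i (vec_upd p i t) =
     indicator {-r..r} t * (partial (partial h i) i (vec_upd p i t) * (r - max A \<bar>t\<bar>)^2 / 2
                             + diagonal_term i p)
     - (indicator {A..r} t + indicator {-r..-A} t) * h (vec_upd p i t)"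
proof -
  have "0 \<le> A"
    unfolding A_def by (rule max_abs_coord_except_nonneg[OF card_ge_2])
  have in_cube: "vec_upd p i t \<in> cube r \<longleftrightarrow> t \<in> {-r..r}"
    using assms by (auto simp: vec_upd_mem_cube_iff[OF card_ge_2])
  have in_region: "vec_upd p i t \<in> dominant_coord_region i \<longleftrightarrow> A < \<bar>t\<bar>"
    using mem_dominant_coord_region_iff[OF card_ge_2, of "vec_upd p i t" i] assms by simp
  have "indicator (cube r \<inter> dominant_coord_region i) (vec_upd p i t) =
      (indicator {A..r} t + indicator {-r..-A} t :: real)"
    using in_cube in_region assms(3) \<open>0 \<le> A\<close> by (cases "t < 0") (auto simp: indicator_def)
  with in_cube show ?thesis
    by (simp add: region_discrepancy_def cube_weight_vec_upd A_def indicator_def max.commute)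
qed

lemma integral_weighted_second_partial_on_line:
  fixes i :: 'n and p :: "(real, 'n) vec"
  defines "A \<equiv> max_abs_coord_except i p"
  assumes "A \<le> r"
  shows "integral {-r..r} (\<lambda>t. partial (partial h i) i (vec_upd p i t) * (r - max A \<bar>t\<bar>)^2 / 2
                                + diagonal_term i p)
       = integral {A..r} (\<lambda>t. h (vec_upd p i t)) + integral {-r..-A} (\<lambda>t. h (vec_upd p i t))"
proof -
  have "0 \<le> A"
    unfolding A_def by (rule max_abs_coord_except_nonneg[OF card_ge_2])
  have on_line: "vec_upd p i t + s *\<^sub>R axis i 1 \<in> cube r" if "t \<in> {-r..r}" "s = 0" for s t
    using that assms vec_upd_in_cube by simp
  let ?P = "\<lambda>t. partial (partial h i) i (vec_upd p i t) * (r - max A \<bar>t\<bar>)^2 / 2"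
  have tent: "integral {-r..r} ?P
      = integral {A..r} (\<lambda>t. h (vec_upd p i t)) + integral {-r..-A} (\<lambda>t. h (vec_upd p i t))
        - (r - A) * (h (vec_upd p i A) + h (vec_upd p i (-A)))"
  proof (rule integral_second_derivative_mult_tent_square)
    fix t :: real assume "t \<in> {-r..r}"
    then show "((\<lambda>t. h (vec_upd p i t)) has_real_derivative partial h i (vec_upd p i t)) (at t)"
      and "((\<lambda>t. partial h i (vec_upd p i t)) has_real_derivative
              partial (partial h i) i (vec_upd p i t)) (at t)"
      using on_line differentiable_h differentiable_partial
      by (auto intro!: has_real_derivative_partial_vec_upd)
  qed (use assms \<open>0 \<le> A\<close> in \<open>auto intro!: continuous_on_restrict_to_line continuous_partial2\<close>)
  have "integral {-r..r} (\<lambda>t. ?P t + diagonal_term i p)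
      = integral {-r..r} ?P + integral {-r..r} (\<lambda>t. diagonal_term i p)"
    using assms by (intro Henstock_Kurzweil_Integration.integral_add integrable_continuous_real
        continuous_intros continuous_on_restrict_to_line continuous_partial2) auto
  also have "integral {-r..r} (\<lambda>t. diagonal_term i p)
      = (r - A) * (h (vec_upd p i A) + h (vec_upd p i (-A)))"
    using r_pos by (simp add: diagonal_term_def A_def)
  finally show ?thesis
    using tent by linarith
qed

lemma line_integral_region_discrepancy:
  fixes i :: 'n and p :: "(real, 'n) vec"
  shows "(\<integral>t. region_discrepancy i (vec_upd p i t) \<partial>lborel) = 0"
proof (cases "max_abs_coord_except i p \<le> r")
  case False
  then have "vec_upd p i t \<notin> cube r" for t
    by (simp add: vec_upd_mem_cube_iff[OF card_ge_2])
  then show ?thesis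
    by (simp add: region_discrepancy_def)
next
  case True
  define A where "A = max_abs_coord_except i p"
  let ?u = "\<lambda>t. h (vec_upd p i t)"
  let ?W = "\<lambda>t. partial (partial h i) i (vec_upd p i t) * (r - max A \<bar>t\<bar>)^2 / 2
                + diagonal_term i p"
  let ?g = "\<lambda>t. indicator {-r..r} t * ?W t
                - (indicator {A..r} t * ?u t + indicator {-r..-A} t * ?u t)"
  have A: "0 \<le> A" "A \<le> r"
    using True max_abs_coord_except_nonneg[OF card_ge_2] by (auto simp: A_def)
  have cW: "continuous_on {-r..r} ?W"
    by (intro continuous_intros continuous_on_restrict_to_line[OF continuous_partial2 True]) auto
  moreover have cu: "continuous_on {A..r} ?u" "continuous_on {-r..-A} ?u"
    using A continuous_on_restrict_to_line[OF continuous_h True]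
    by (auto intro: continuous_on_subset)
  ultimately have integrable_g: "integrable lborel ?g"
    by (intro Bochner_Integration.integrable_diff Bochner_Integration.integrable_add
        integrable_indicator_Icc_mult)
  have "continuous_on UNIV (vec_upd p i)"
    unfolding vec_upd_def by (intro continuous_intros)
  then have "vec_upd p i \<in> borel_measurable lborel"
    by (simp add: borel_measurable_continuous_onI)
  moreover have "region_discrepancy i \<in> borel_measurable borel"
    using borel_measurable_integrable[OF integrable_region_discrepancy] by simp
  ultimately have "(\<lambda>t. region_discrepancy i (vec_upd p i t)) \<in> borel_measurable lborel"
    by (rule measurable_compose)
  moreover have "AE t in lborel. region_discrepancy i (vec_upd p i t) = ?g t"
    using AE_lborel_singleton[of A] AE_lborel_singleton[of "-A"]
  proof eventually_elim
    case (elim t)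
    then have "\<bar>t\<bar> \<noteq> A"
      by (auto simp: abs_if)
    then show ?case
      using region_discrepancy_on_line[of i p t] True by (simp add: A_def algebra_simps)
  qed
  ultimately have "(\<integral>t. region_discrepancy i (vec_upd p i t) \<partial>lborel) = (\<integral>t. ?g t \<partial>lborel)"
    using borel_measurable_integrable[OF integrable_g] by (intro integral_cong_AE)
  also have "\<dots> = integral {-r..r} ?W - (integral {A..r} ?u + integral {-r..-A} ?u)"
    using cW cu
    by (simp only: Bochner_Integration.integral_diff Bochner_Integration.integral_add
        Bochner_Integration.integrable_add integrable_indicator_Icc_mult
        lborel_integral_indicator_Icc)
  also have "\<dots> = 0"
    using integral_weighted_second_partial_on_line[OF True] by (simp add: A_def)
  finally show ?thesis .
qed

lemma integral_region_discrepancy: "integral\<^sup>L lborel (region_discrepancy i) = 0"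
proof (rule lborel_integral_zero_if_line_integrals_zero[OF _ integrable_region_discrepancy])
  show "axis i (1::real) \<in> Basis"
    by simp
  fix p :: "(real, 'n) vec" assume "p \<bullet> axis i 1 = 0"
  then have "p + t *\<^sub>R axis i 1 = vec_upd p i t" for t
    by (simp add: vec_upd_def inner_axis)
  then show "(\<integral>t. region_discrepancy i (p + t *\<^sub>R axis i 1) \<partial>lborel) = 0"
    by (simp add: line_integral_region_discrepancy)
qed

lemma integral_cube_eq_integral_sum_diagonal_terms:
  assumes laplacian: "\<And>x. x \<in> cube r \<Longrightarrow> (\<Sum>i\<in>UNIV. partial (partial h i) i x) = 0"
  shows "(\<integral>x. indicator (cube r) x * h x \<partial>lborel)
       = (\<integral>x. indicator (cube r) x * (\<Sum>i\<in>UNIV. diagonal_term i x) \<partial>lborel)"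
proof -
  have integrable_h: "integrable lborel (\<lambda>x. indicator (cube r) x * h x)"
    using borel_integrable_compact[OF compact_cube continuous_h] by (simp add: real_scaleR_def)
  have "continuous_on (cube r) (\<lambda>x. \<Sum>i\<in>UNIV. diagonal_term i x)"
    by (intro continuous_intros continuous_on_diagonal_term)
  from borel_integrable_compact[OF compact_cube this]
  have integrable_T:
    "integrable lborel (\<lambda>x. indicator (cube r) x * (\<Sum>i\<in>UNIV. diagonal_term i x))"
    by (simp add: real_scaleR_def)
  have sum_discrepancy: "(\<Sum>i\<in>UNIV. region_discrepancy i x) =
      indicator (cube r) x * (\<Sum>i\<in>UNIV. diagonal_term i x) - indicator (cube r) x * h x" for x
  proof (cases "x \<in> cube r")
    case True
    have "(\<Sum>i\<in>UNIV. region_discrepancy i x) =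
        cube_weight x * (\<Sum>i\<in>UNIV. partial (partial h i) i x) + (\<Sum>i\<in>UNIV. diagonal_term i x)
        - (\<Sum>i\<in>UNIV. indicator (dominant_coord_region i) x) * h x"
      using True by (simp add: region_discrepancy_def sum_subtractf sum.distrib sum_distrib_left
          sum_distrib_right mult.commute)
    with True show ?thesis
      by (simp add: laplacian sum_indicator_dominant_coord_region)
  qed (simp add: region_discrepancy_def)
  have "(\<integral>x. indicator (cube r) x * (\<Sum>i\<in>UNIV. diagonal_term i x) \<partial>lborel)
      - (\<integral>x. indicator (cube r) x * h x \<partial>lborel)
      = (\<integral>x. (\<Sum>i\<in>UNIV. region_discrepancy i x) \<partial>lborel)"
    using integrable_h integrable_T by (simp add: sum_discrepancy)
  also have "\<dots> = 0"
    by (simp add: integrable_region_discrepancy integral_region_discrepancy)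
  finally show ?thesis
    by simp
qed

lemma diagonal_term_nonpos:
  assumes diagonal: "\<And>x j k. x \<in> cube r \<Longrightarrow> j \<noteq> k \<Longrightarrow> \<bar>x$j\<bar> = \<bar>x$k\<bar> \<Longrightarrow> h x \<le> 0"
    and "x \<in> cube r"
  shows "diagonal_term i x \<le> 0"
proof -
  let ?A = "max_abs_coord_except i x"
  obtain j where j: "j \<noteq> i" "\<bar>x$j\<bar> = ?A"
    using max_abs_coord_except_attained[OF card_ge_2] by blast
  have A: "0 \<le> ?A" "?A \<le> r"
    using max_abs_coord_except_nonneg[OF card_ge_2] \<open>x \<in> cube r\<close>
    by (auto simp: max_abs_coord_except_le_iff[OF card_ge_2] cube_def)
  have "h (vec_upd x i s) \<le> 0" if "\<bar>s\<bar> = ?A" for s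
    using that j A \<open>x \<in> cube r\<close>
    by (intro diagonal[of _ i j]) (auto simp: vec_upd_mem_cube_iff[OF card_ge_2])
  then have "h (vec_upd x i ?A) + h (vec_upd x i (- ?A)) \<le> 0"
    using A by (simp add: add_nonpos_nonpos)
  then show ?thesis
    unfolding diagonal_term_def using A r_pos
    by (intro divide_nonpos_pos mult_nonneg_nonpos) auto
qed

lemma integral_cube_nonpos:
  assumes "\<And>x. x \<in> cube r \<Longrightarrow> (\<Sum>i\<in>UNIV. partial (partial h i) i x) = 0"
    and "\<And>x j k. x \<in> cube r \<Longrightarrow> j \<noteq> k \<Longrightarrow> \<bar>x$j\<bar> = \<bar>x$k\<bar> \<Longrightarrow> h x \<le> 0"
  shows "(\<integral>x. indicator (cube r) x * h x \<partial>lborel) \<le> 0"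
proof -
  have "0 \<le> - indicator (cube r) x * (\<Sum>i\<in>UNIV. diagonal_term i x)" for x
    using diagonal_term_nonpos[OF assms(2)]
    by (cases "x \<in> cube r") (auto intro: sum_nonpos)
  then have "0 \<le> (\<integral>x. - indicator (cube r) x * (\<Sum>i\<in>UNIV. diagonal_term i x) \<partial>lborel)"
    by (intro Bochner_Integration.integral_nonneg)
  then show ?thesis
    by (simp add: integral_cube_eq_integral_sum_diagonal_terms[OF assms(1)])
qed

end

lemma axial_C2_on_cube_if_harmonic_on:
  fixes h :: "real^'n::{finite,linorder} \<Rightarrow> real"
  assumes "CARD('n) \<ge> 2" "r > 0" "cube r \<subseteq> S" "harmonic_on S h"
  shows "axial_C2_on_cube r h"
  using assms unfolding harmonic_on_def axial_C2_on_cube_def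
  by (auto intro: continuous_on_subset[OF _ assms(3)])

lemma L1_norm_eq_lborel_integral:
  fixes u :: "real^'n::finite \<Rightarrow> real"
  assumes "I \<in> sets borel" "continuous_on I u" "\<And>x. x \<in> I \<Longrightarrow> 0 \<le> u x"
  shows "L1_norm I u = (\<integral>x. indicator I x * u x \<partial>lborel)"
proof -
  have "(\<lambda>x. indicator I x *\<^sub>R \<bar>u x\<bar>) \<in> borel_measurable borel"
    using assms(1,2) by (intro borel_measurable_continuous_on_indicator continuous_intros)
  then have "L1_norm I u = (\<integral>x. indicator I x * \<bar>u x\<bar> \<partial>lborel)"
    unfolding L1_norm_def using assms(1)
    by (simp add: integral_restrict_space integral_completion)
  also have "\<dots> = (\<integral>x. indicator I x * u x \<partial>lborel)"
    using assms(3) by (intro Bochner_Integration.integral_cong) (auto simp: indicator_def)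
  finally show ?thesis .
qed

lemma prod_square_diff_squares_eq_0:
  fixes x :: "real^'n::{finite,linorder}"
  assumes "i \<noteq> j" "\<bar>x$i\<bar> = \<bar>x$j\<bar>"
  shows "(\<Prod>p\<in>{(i, j). i < j}. ((x $ fst p)^2 - (x $ snd p)^2)^2) = 0"
proof -
  have sq: "(x$i)^2 = (x$j)^2"
    using assms(2) by (metis power2_abs)
  have "\<exists>p\<in>{(i, j). i < j}. ((x $ fst p)^2 - (x $ snd p)^2)^2 = 0"
  proof (cases "i < j")
    case True
    then show ?thesis
      using sq by (intro bexI[of _ "(i, j)"]) auto
  next
    case False
    with assms(1) have "j < i"
      by simp
    then show ?thesis
      using sq by (intro bexI[of _ "(j, i)"]) auto
  qed
  then show ?thesis
    by (intro prod_zero) auto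
qed

lemma L1_norm_le_L1_norm_diff:
  fixes f h :: "real^'n::finite \<Rightarrow> real"
  assumes "compact I" "continuous_on I f" "continuous_on I h"
    and "\<And>x. x \<in> I \<Longrightarrow> 0 \<le> f x" "\<And>x. x \<in> I \<Longrightarrow> h x \<le> f x"
    and "(\<integral>x. indicator I x * h x \<partial>lborel) \<le> 0"
  shows "L1_norm I f \<le> L1_norm I (\<lambda>x. f x - h x)"
proof -
  have I: "I \<in> sets borel"
    using assms(1) by (simp add: compact_imp_closed)
  have integrable: "integrable lborel (\<lambda>x. indicator I x * u x)"
    if "continuous_on I u" for u :: "_ \<Rightarrow> real"
    using borel_integrable_compact[OF assms(1) that] by (simp add: real_scaleR_def)
  have "L1_norm I f = (\<integral>x. indicator I x * f x \<partial>lborel)"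
    using I assms(2,4) by (rule L1_norm_eq_lborel_integral)
  also have "\<dots> \<le> (\<integral>x. indicator I x * f x \<partial>lborel) - (\<integral>x. indicator I x * h x \<partial>lborel)"
    using assms(6) by simp
  also have "\<dots> = (\<integral>x. indicator I x * (f x - h x) \<partial>lborel)"
    using integrable[OF assms(2)] integrable[OF assms(3)] by (simp add: right_diff_distrib)
  also have "\<dots> = L1_norm I (\<lambda>x. f x - h x)"
    using I assms(2,3,5) by (intro L1_norm_eq_lborel_integral[symmetric] continuous_on_diff) auto
  finally show ?thesis .
qed

theorem corollary3:
  fixes r :: real and I :: "(real^('n::{finite,linorder})) set" and g f :: "real^('n::{finite,linorder}) \<Rightarrow> real"
  assumes "CARD('n::{finite,linorder}) \<ge> 2"
    and "r > 0"
    and "I = {x. \<forall>i. \<bar>x $ i\<bar> \<le> r}"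
    and "continuous_on I g"
    and "\<forall>x\<in>I. g x \<ge> 0"
    and "\<And>x. f x = g x * (\<Prod>p\<in>{(i, j). i < j}. ((x $ fst p)^2 - (x $ snd p)^2)^2)"
  shows "(\<forall>x\<in>I. 0 \<le> f x) \<and> (\<forall>h\<in>harm_below I f. L1_norm I f \<le> L1_norm I (\<lambda>x. f x - h x))"
proof -
  have I: "I = cube r"
    using assms(3) by (simp add: cube_def)
  have f_nonneg: "\<forall>x\<in>I. 0 \<le> f x"
    using assms(5,6) by (auto intro!: mult_nonneg_nonneg prod_nonneg)
  have "f = (\<lambda>x. g x * (\<Prod>p\<in>{(i, j). i < j}. ((x $ fst p)^2 - (x $ snd p)^2)^2))"
    using assms(6) by blast
  then have continuous_f: "continuous_on I f"
    by (simp add: continuous_intros assms(4))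
  have "L1_norm I f \<le> L1_norm I (\<lambda>x. f x - h x)" if "h \<in> harm_below I f" for h
  proof -
    from that have h_le_f: "\<And>x. x \<in> I \<Longrightarrow> h x \<le> f x" and "h \<in> harm I"
      unfolding harm_below_def by auto
    then obtain S where "I \<subseteq> S" "harmonic_on S h"
      unfolding harm_def by auto
    then interpret axial_C2_on_cube r h
      using assms(1,2) I by (intro axial_C2_on_cube_if_harmonic_on) auto
    have "(\<integral>x. indicator (cube r) x * h x \<partial>lborel) \<le> 0"
    proof (rule integral_cube_nonpos)
      show "(\<Sum>i\<in>UNIV. partial (partial h i) i x) = 0" if "x \<in> cube r" for x
        using \<open>harmonic_on S h\<close> \<open>I \<subseteq> S\<close> that I unfolding harmonic_on_def by auto
      show "h x \<le> 0" if "x \<in> cube r" "j \<noteq> k" "\<bar>x$j\<bar> = \<bar>x$k\<bar>" for x j k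
        using h_le_f[of x] that I by (simp add: assms(6) prod_square_diff_squares_eq_0)
    qed
    then show ?thesis
      using f_nonneg h_le_f continuous_f continuous_h compact_cube I
      by (intro L1_norm_le_L1_norm_diff) auto
  qed
  with f_nonneg show ?thesis
    by blast
qed

end
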